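(* Under the standing setup and Assumption 1, $$E\big\|\sqrt n(\widehat{\bm p}-\bm p)-\sqrt n\,\bm U\big\|_2^2\to0,$$ where $\|\cdot\|_2$ is the Euclidean norm on $\mathbb R^d$.
   Context: **Setup.** Fix $d\ge1$ and two treatment groups $g=1,2$. There are $n=n_c+n_1+n_2$ mutually independent subjects. - Each of $n_c$ "complete" subjects $j=1,\dots,n_c$ yields a pair $(\bm X_{1j}^{(c)},\bm X_{2j}^{(c)})$ of $\mathbb R^d$-valued vectors, one per group. These pairs are i.i.d. over $j$; the components may be arbitrarily dependent. - Each of $n_1$ subjects yields only a group-1 vector $\bm X_{1k}^{(i)}$, and each of $n_2$ subjects yields only a group-2 vector $\bm X_{2k}^{(i)}$. - Within group $g$, all vectors (complete or incomplete) have the same joint distribution. - $X_{gk}^{(A)(l)}$ is the $l$-th component, $A\in\{c,i\}$. **Marginals and effect sizes.** $F_g^{(l)}(x)=\tfrac12[P(X\le x)+P(X<x)]$ is the normalized distribution function of the $l$-th marginal in group $g$ (non-degenerate). Set $p^{(l)}=\int F_1^{(l)}\,dF_2^{(l)}$ and $\bm p=(p^{(1)},\dots,p^{(d)})^\top$. **Estimator.** Let $m_g=n_c+n_g$ and let $c(x)=0,\tfrac12,1$ according as $x<0$, $x=0$, $x>0$. Define $$\widehat F_g^{(l)}(x)=\frac1{m_g}\Big[\sum_{k=1}^{n_c}c\big(x-X_{gk}^{(c)(l)}\big)+\sum_{k=1}^{n_g}c\big(x-X_{gk}^{(i)(l)}\big)\Big],\qquad \widehat p^{(l)}=\int\widehat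 F_1^{(l)}\,d\widehat F_2^{(l)},$$ and $\widehat{\bm p}=(\widehat p^{(1)},\dots,\widehat p^{(d)})^\top$. **Asymptotically equivalent statistic.** Define $Y_{1k}^{(A)(l)}=F_2^{(l)}(X_{1k}^{(A)(l)})$ and $Y_{2k}^{(A)(l)}=F_1^{(l)}(X_{2k}^{(A)(l)})$. Let $$U^{(l)}=\frac1{m_2}\sum_{k=1}^{n_c}Y_{2k}^{(c)(l)}-\frac1{m_1}\sum_{k=1}^{n_c}Y_{1k}^{(c)(l)}+\frac1{m_2}\sum_{k=1}^{n_2}Y_{2k}^{(i)(l)}-\frac1{m_1}\sum_{k=1}^{n_1}Y_{1k}^{(i)(l)}+1-2p^{(l)},$$ and $\bm U=(U^{(1)},\dots,U^{(d)})^\top$. **Assumption 1.** $n_c+n_g\to\infty$ and $n/(n_c+n_g)\le N_0<\infty$ for $g=1,2$. *)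

theory Defs
  imports "HOL-Probability.Probability"
begin

definition cfun :: "real \<Rightarrow> real" where
  "cfun x = (if x < 0 then 0 else if x = 0 then 1/2 else 1)"

definition normcdf :: "real measure \<Rightarrow> real \<Rightarrow> real" where
  "normcdf P x = (measure P {..x} + measure P {..<x}) / 2"

definition marg1 :: "((real^'d) \<times> (real^'d)) measure \<Rightarrow> 'd \<Rightarrow> real measure" where
  "marg1 Pc l = distr Pc borel (\<lambda>z. fst z $ l)"

definition marg2 :: "((real^'d) \<times> (real^'d)) measure \<Rightarrow> 'd \<Rightarrow> real measure" where
  "marg2 Pc l = distr Pc borel (\<lambda>z. snd z $ l)"

definition pvec :: "((real^'d) \<times> (real^'d)) measure \<Rightarrow> real^'d" where
  "pvec Pc = (\<chi> l. integral\<^sup>L (marg2 Pc l) (normcdf (marg1 Pc l)))"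

definition Fhat :: "nat \<Rightarrow> (nat \<Rightarrow> real) \<Rightarrow> nat \<Rightarrow> (nat \<Rightarrow> real) \<Rightarrow> real \<Rightarrow> real" where
  "Fhat nc xc ni xi x =
     ((\<Sum>k<nc. cfun (x - xc k)) + (\<Sum>k<ni. cfun (x - xi k))) / real (nc + ni)"

text \<open>The estimator \<open>p_hat\<close>: integral of the empirical F_1 with respect to the
  empirical F_2, i.e. the average of \<open>F_1 hat\<close> over the group-2 observations.\<close>
definition phat :: "nat \<Rightarrow> nat \<Rightarrow> nat \<Rightarrow> (nat \<Rightarrow> (real^'d) \<times> (real^'d))
    \<Rightarrow> (nat \<Rightarrow> real^'d) \<Rightarrow> (nat \<Rightarrow> real^'d) \<Rightarrow> real^'d" where
  "phat nc n1 n2 xc x1 x2 = (\<chi> l.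
     let F1 = Fhat nc (\<lambda>k. fst (xc k) $ l) n1 (\<lambda>k. x1 k $ l)
     in ((\<Sum>k<nc. F1 (snd (xc k) $ l)) + (\<Sum>k<n2. F1 (x2 k $ l))) / real (nc + n2))"

definition Uvec :: "((real^'d) \<times> (real^'d)) measure \<Rightarrow> nat \<Rightarrow> nat \<Rightarrow> nat \<Rightarrow> (nat \<Rightarrow> (real^'d) \<times> (real^'d))
    \<Rightarrow> (nat \<Rightarrow> real^'d) \<Rightarrow> (nat \<Rightarrow> real^'d) \<Rightarrow> real^'d" where
  "Uvec Pc nc n1 n2 xc x1 x2 = (\<chi> l.
     let F1 = normcdf (marg1 Pc l); F2 = normcdf (marg2 Pc l);
         m1 = real (nc + n1); m2 = real (nc + n2)
     in (\<Sum>k<nc. F1 (snd (xc k) $ l)) / m2 - (\<Sum>k<nc. F2 (fst (xc k) $ l)) / m1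
        + (\<Sum>k<n2. F1 (x2 k $ l)) / m2 - (\<Sum>k<n1. F2 (x1 k $ l)) / m1
        + 1 - 2 * pvec Pc $ l)"

end

theory Submission
  imports Defs
begin

text \<open>
  In each coordinate, the difference between p_hat - p and its linearisation U equals
  1/(m1 m2) times the double sum, over group-1 observations s and group-2 observations t,
  of h(X_s, Y_t), where h(a, b) = c(b - a) - F1(b) - (1 - F2(a)) + p integrates to zero in
  each argument separately. Since subjects are independent, E[h(X_s, Y_t) h(X_s', Y_t')]
  vanishes as soon as one subject occurs exactly once among s, t, s', t'. Apart from the
  diagonal s = t (complete subjects), only (s', t') = (s, t) and (s', t') = (t, s) survive,
  so the second moment of the double sum is at most 24 m1 m2. After scaling by n / (m1 m2)^2
  the mean squared error is at most 24 d n / (m1 m2) <= 24 d N0 / m2, which tends to zero.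
\<close>

context prob_space
begin

lemma integrable_bounded_real:
  fixes f :: "'a \<Rightarrow> real"
  assumes "f \<in> borel_measurable M" "\<And>\<omega>. \<bar>f \<omega>\<bar> \<le> C"
  shows "integrable M f"
  using assms by (intro integrable_const_bound[where B=C]) auto

lemma integrable_sq_bounded:
  fixes f :: "'a \<Rightarrow> real"
  assumes "f \<in> borel_measurable M" "\<And>\<omega>. \<bar>f \<omega>\<bar> \<le> C"
  shows "integrable M (\<lambda>\<omega>. (f \<omega>)\<^sup>2)"
proof (rule integrable_bounded_real)
  show "\<bar>(f \<omega>)\<^sup>2\<bar> \<le> C\<^sup>2" for \<omega>
    using power_mono[OF assms(2) abs_ge_zero, of \<omega> 2] by simp
qed (use assms(1) in measurable)

lemma expectation_sq_add_le:
  fixes f g :: "'a \<Rightarrow> real"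
  assumes "f \<in> borel_measurable M" "g \<in> borel_measurable M"
    and "\<And>\<omega>. \<bar>f \<omega>\<bar> \<le> A" "\<And>\<omega>. \<bar>g \<omega>\<bar> \<le> B"
  shows "expectation (\<lambda>\<omega>. (f \<omega> + g \<omega>)\<^sup>2)
           \<le> 2 * expectation (\<lambda>\<omega>. (f \<omega>)\<^sup>2) + 2 * expectation (\<lambda>\<omega>. (g \<omega>)\<^sup>2)"
proof -
  have "\<bar>f \<omega> + g \<omega>\<bar> \<le> A + B" for \<omega>
    using abs_triangle_ineq[of "f \<omega>" "g \<omega>"] assms(3,4)[of \<omega>] by linarith
  moreover have "(f \<omega> + g \<omega>)\<^sup>2 \<le> 2 * (f \<omega>)\<^sup>2 + 2 * (g \<omega>)\<^sup>2" for \<omega>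
    using sum_squares_ge_zero[of "f \<omega> - g \<omega>" 0] by (simp add: power2_eq_square algebra_simps)
  ultimately have "expectation (\<lambda>\<omega>. (f \<omega> + g \<omega>)\<^sup>2) \<le> expectation (\<lambda>\<omega>. 2 * (f \<omega>)\<^sup>2 + 2 * (g \<omega>)\<^sup>2)"
    using assms
    by (intro integral_mono integrable_sq_bounded[where C="A + B"] Bochner_Integration.integrable_add
        integrable_mult_right integrable_sq_bounded) auto
  also have "\<dots> = 2 * expectation (\<lambda>\<omega>. (f \<omega>)\<^sup>2) + 2 * expectation (\<lambda>\<omega>. (g \<omega>)\<^sup>2)"
    using integrable_sq_bounded[OF assms(1,3)] integrable_sq_bounded[OF assms(2,4)] by simp
  finally show ?thesis .
qed

end

lemma (in prob_space) indep_var_expectation_eq_0: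
  fixes \<Phi> :: "'b \<Rightarrow> 'b \<Rightarrow> real"
  assumes indep: "indep_var S X T Y"
    and meas: "(\<lambda>(x, y). \<Phi> x y) \<in> borel_measurable (S \<Otimes>\<^sub>M T)"
    and bounded: "\<And>x y. \<bar>\<Phi> x y\<bar> \<le> B"
    and centred: "\<And>y. y \<in> space T \<Longrightarrow> (\<integral>x. \<Phi> x y \<partial>distr M S X) = 0"
  shows "expectation (\<lambda>\<omega>. \<Phi> (X \<omega>) (Y \<omega>)) = 0"
proof -
  have X: "random_variable S X" and Y: "random_variable T Y"
    and joint: "distr M (S \<Otimes>\<^sub>M T) (\<lambda>\<omega>. (X \<omega>, Y \<omega>)) = distr M S X \<Otimes>\<^sub>M distr M T Y"
    using indep by (auto simp: indep_var_distribution_eq)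
  interpret XY: pair_prob_space "distr M S X" "distr M T Y"
    using X Y by (simp add: pair_prob_space_def pair_sigma_finite_def prob_space_imp_sigma_finite
        prob_space_distr)
  have XY: "(\<lambda>\<omega>. (X \<omega>, Y \<omega>)) \<in> measurable M (S \<Otimes>\<^sub>M T)"
    using X Y by measurable
  have "expectation (\<lambda>\<omega>. \<Phi> (X \<omega>) (Y \<omega>))
      = (\<integral>z. case_prod \<Phi> z \<partial>(distr M S X \<Otimes>\<^sub>M distr M T Y))"
    using integral_distr[OF XY meas] by (simp add: joint)
  also have "\<dots> = (\<integral>y. (\<integral>x. \<Phi> x y \<partial>distr M S X) \<partial>distr M T Y)"
    using meas bounded
    by (intro XY.integral_snd[symmetric] XY.integrable_const_bound[where B=B])
       (auto simp: measurable_cong_sets[OF sets_pair_measure_cong[OF sets_distr sets_distr] refl])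
  also have "\<dots> = (\<integral>y. 0 \<partial>distr M T Y)"
    by (intro Bochner_Integration.integral_cong refl centred) simp
  also have "\<dots> = 0"
    by simp
  finally show ?thesis .
qed

lemma (in prob_space) indep_vars_expectation_eq_0:
  fixes \<Phi> :: "'b \<Rightarrow> ('i \<Rightarrow> 'b) \<Rightarrow> real"
  assumes indep: "indep_vars (\<lambda>_. N) Z I" and "s \<in> I" "B \<subseteq> I" "s \<notin> B"
    and meas: "(\<lambda>(x, y). \<Phi> x y) \<in> borel_measurable (N \<Otimes>\<^sub>M PiM B (\<lambda>_. N))"
    and bounded: "\<And>x y. \<bar>\<Phi> x y\<bar> \<le> C"
    and centred: "\<And>y. y \<in> space (PiM B (\<lambda>_. N)) \<Longrightarrow> (\<integral>x. \<Phi> x y \<partial>distr M N (Z s)) = 0"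
  shows "expectation (\<lambda>\<omega>. \<Phi> (Z s \<omega>) (restrict (\<lambda>i. Z i \<omega>) B)) = 0"
proof -
  txt \<open>\<open>indep_var\<close> needs both variables in the same space, so \<open>Z s\<close> enters as its restriction
    to \<open>{s}\<close>.\<close>
  have Zs[measurable]: "Z s \<in> measurable M N"
    using indep \<open>s \<in> I\<close> by (auto simp: indep_vars_def)
  have Zs_restrict: "(\<lambda>\<omega>. restrict (\<lambda>i. Z i \<omega>) {s}) \<in> measurable M (PiM {s} (\<lambda>_. N))"
    using Zs by (intro measurable_restrict) auto
  have "(\<lambda>(x, y). (x s, y)) \<in> measurable (PiM {s} (\<lambda>_. N) \<Otimes>\<^sub>M PiM B (\<lambda>_. N)) (N \<Otimes>\<^sub>M PiM B (\<lambda>_. N))"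
    by measurable
  from measurable_comp[OF this meas]
  have meas_s: "(\<lambda>(x, y). \<Phi> (x s) y) \<in> borel_measurable (PiM {s} (\<lambda>_. N) \<Otimes>\<^sub>M PiM B (\<lambda>_. N))"
    by (simp add: comp_def case_prod_beta)
  have "expectation (\<lambda>\<omega>. (\<lambda>x y. \<Phi> (x s) y) (restrict (\<lambda>i. Z i \<omega>) {s}) (restrict (\<lambda>i. Z i \<omega>) B)) = 0"
  proof (rule indep_var_expectation_eq_0[OF indep_var_restrict[OF indep] meas_s bounded])
    fix y assume y: "y \<in> space (PiM B (\<lambda>_. N))"
    have "(\<lambda>x. \<Phi> x y) \<in> borel_measurable N"
      using measurable_comp[OF measurable_Pair2'[OF y] meas] by (simp add: comp_def)
    then show "(\<integral>x. \<Phi> (x s) y \<partial>distr M (PiM {s} (\<lambda>_. N)) (\<lambda>\<omega>. restrict (\<lambda>i. Z i \<omega>) {s})) = 0"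
      using centred[OF y] by (simp add: integral_distr[OF Zs_restrict] integral_distr[OF Zs])
  qed (use assms(2-4) in auto)
  then show ?thesis by simp
qed

lemma cfun_nonneg: "0 \<le> cfun x"
  and cfun_le_1: "cfun x \<le> 1"
  and abs_cfun_le_1: "\<bar>cfun x\<bar> \<le> 1"
  by (simp_all add: cfun_def)

lemma cfun_minus: "cfun (- x) = 1 - cfun x"
  by (auto simp: cfun_def)

lemma borel_measurable_cfun[measurable]: "cfun \<in> borel_measurable borel"
  unfolding cfun_def[abs_def] by measurable

lemma cfun_eq_indicator: "cfun (b - a) = (indicator {..b} a + indicator {..<b} a) / 2"
  by (auto simp: cfun_def indicator_def)

lemma normcdf_nonneg: "0 \<le> normcdf P x"
  by (simp add: normcdf_def)

locale real_prob_space = prob_space P for P :: "real measure" +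
  assumes sets_eq_borel: "sets P = sets borel"
begin

lemma normcdf_le_1: "normcdf P x \<le> 1"
  using add_mono[OF prob_le_1 prob_le_1, of "{..x}" "{..<x}"] by (simp add: normcdf_def)

lemma abs_normcdf_le_1: "\<bar>normcdf P x\<bar> \<le> 1"
  using normcdf_nonneg[of P x] normcdf_le_1[of x] by simp

lemma mono_normcdf: "mono (normcdf P)"
  unfolding mono_def normcdf_def
  by (auto intro!: add_mono divide_right_mono finite_measure_mono simp: sets_eq_borel)

lemma borel_measurable_normcdf[measurable]: "normcdf P \<in> borel_measurable borel"
  by (rule borel_measurable_mono[OF mono_normcdf])

lemma integrable_abs_le_1:
  fixes f :: "real \<Rightarrow> real"
  assumes "f \<in> borel_measurable borel" "\<And>x. \<bar>f x\<bar> \<le> 1"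
  shows "integrable P f"
  using assms(1) by (intro integrable_bounded_real[OF _ assms(2)])
    (simp add: measurable_cong_sets[OF sets_eq_borel refl])

lemma integral_cfun_left: "(\<integral>a. cfun (b - a) \<partial>P) = normcdf P b"
proof -
  have "{..b} \<in> sets P" "{..<b} \<in> sets P"
    by (auto simp: sets_eq_borel)
  then show ?thesis
    by (simp add: cfun_eq_indicator normcdf_def integrable_indicator_iff emeasure_eq_measure
        del: integral_divide_zero)
qed

lemma integral_cfun_right: "(\<integral>b. cfun (b - a) \<partial>P) = 1 - normcdf P a"
proof -
  have "(\<integral>b. cfun (b - a) \<partial>P) = (\<integral>b. 1 - cfun (a - b) \<partial>P)"
    using cfun_minus[of "a - b" for b] by simp
  also have "\<dots> = 1 - normcdf P a"
    by (simp add: integrable_abs_le_1 abs_cfun_le_1 integral_cfun_left prob_space)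
  finally show ?thesis .
qed

end

section \<open>The doubly centred kernel\<close>

definition centred_kernel :: "real measure \<Rightarrow> real measure \<Rightarrow> real \<Rightarrow> real \<Rightarrow> real" where
  "centred_kernel P1 P2 a b =
     cfun (b - a) - normcdf P1 b - (1 - normcdf P2 a) + (\<integral>x. normcdf P1 x \<partial>P2)"

locale real_prob_pair = P1: real_prob_space P1 + P2: real_prob_space P2
  for P1 P2 :: "real measure"
begin

lemma integral_normcdf_swap: "(\<integral>a. normcdf P2 a \<partial>P1) = 1 - (\<integral>b. normcdf P1 b \<partial>P2)"
proof -
  interpret pair_prob_space P1 P2 ..
  have sets: "sets (P1 \<Otimes>\<^sub>M P2) = sets (borel \<Otimes>\<^sub>M borel)"
    by (intro sets_pair_measure_cong P1.sets_eq_borel P2.sets_eq_borel)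
  have "integrable (P1 \<Otimes>\<^sub>M P2) (\<lambda>(a, b). cfun (b - a))"
    by (intro integrable_const_bound[where B=1])
       (auto simp: measurable_cong_sets[OF sets refl] abs_cfun_le_1 split: prod.splits)
  then have "(\<integral>b. (\<integral>a. cfun (b - a) \<partial>P1) \<partial>P2) = (\<integral>a. (\<integral>b. cfun (b - a) \<partial>P2) \<partial>P1)"
    using Fubini_integral[of "\<lambda>a b. cfun (b - a)"] by simp
  then show ?thesis
    by (simp add: P1.integral_cfun_left P2.integral_cfun_right P1.integrable_abs_le_1
        P2.abs_normcdf_le_1 P1.prob_space)
qed

lemma abs_centred_kernel_le: "\<bar>centred_kernel P1 P2 a b\<bar> \<le> 2"
proof -
  have "0 \<le> (\<integral>x. normcdf P1 x \<partial>P2)" "(\<integral>x. normcdf P1 x \<partial>P2) \<le> 1"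
    by (auto intro!: P2.integral_le_const P2.integrable_abs_le_1
        simp: normcdf_nonneg P1.normcdf_le_1 P1.abs_normcdf_le_1)
  then show ?thesis
    using cfun_nonneg[of "b - a"] cfun_le_1[of "b - a"] normcdf_nonneg[of P1 b] P1.normcdf_le_1[of b]
      normcdf_nonneg[of P2 a] P2.normcdf_le_1[of a]
    unfolding centred_kernel_def by linarith
qed

lemma borel_measurable_centred_kernel[measurable]:
  assumes [measurable]: "f \<in> borel_measurable M" "g \<in> borel_measurable M"
  shows "(\<lambda>x. centred_kernel P1 P2 (f x) (g x)) \<in> borel_measurable M"
  unfolding centred_kernel_def by measurable

lemma integral_centred_kernel_fst: "(\<integral>a. centred_kernel P1 P2 a b \<partial>P1) = 0"
  unfolding centred_kernel_def
  by (simp add: P1.integrable_abs_le_1 abs_cfun_le_1 P2.abs_normcdf_le_1 P1.integral_cfun_left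
      integral_normcdf_swap P1.prob_space)

lemma centred_kernel_swap: "centred_kernel P2 P1 b a = - centred_kernel P1 P2 a b"
  unfolding centred_kernel_def using cfun_minus[of "b - a"] integral_normcdf_swap by simp

end

lemma real_prob_pair_swap: "real_prob_pair P1 P2 \<Longrightarrow> real_prob_pair P2 P1"
  unfolding real_prob_pair_def by simp

section \<open>Second moment of the double kernel sum\<close>

lemma card_Int_doubleton_le: "card (A \<inter> {a, b}) \<le> 2"
  by (rule order_trans[OF card_mono[OF _ Int_lower2]]) (auto simp: card_insert_if)

locale two_sample = prob_space M + real_prob_pair P1 P2
  for M :: "'a measure" and P1 P2 :: "real measure" +
  fixes Z :: "'i \<Rightarrow> 'a \<Rightarrow> 'v::topological_space" and I S1 S2 :: "'i set"
    and \<alpha> \<beta> :: "'v \<Rightarrow> real"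
  assumes indep: "indep_vars (\<lambda>_. borel) Z I"
    and finite_I: "finite I" and S1_subset: "S1 \<subseteq> I" and S2_subset: "S2 \<subseteq> I"
    and borel_measurable_\<alpha>[measurable]: "\<alpha> \<in> borel_measurable borel"
    and borel_measurable_\<beta>[measurable]: "\<beta> \<in> borel_measurable borel"
    and law1: "\<And>s. s \<in> S1 \<Longrightarrow> distr M borel (\<lambda>\<omega>. \<alpha> (Z s \<omega>)) = P1"
    and law2: "\<And>t. t \<in> S2 \<Longrightarrow> distr M borel (\<lambda>\<omega>. \<beta> (Z t \<omega>)) = P2"
begin

lemma borel_measurable_Z[measurable]: "i \<in> I \<Longrightarrow> Z i \<in> borel_measurable M"
  using indep by (auto simp: indep_vars_def)

definition kernel_term :: "'i \<Rightarrow> 'i \<Rightarrow> 'a \<Rightarrow> real" where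
  "kernel_term s t \<omega> = centred_kernel P1 P2 (\<alpha> (Z s \<omega>)) (\<beta> (Z t \<omega>))"

lemma abs_kernel_term_le: "\<bar>kernel_term s t \<omega>\<bar> \<le> 2"
  unfolding kernel_term_def by (rule abs_centred_kernel_le)

lemma abs_kernel_term_mult_le: "\<bar>kernel_term s t \<omega> * kernel_term s' t' \<omega>\<bar> \<le> 4"
  using mult_mono[OF abs_kernel_term_le abs_kernel_term_le] by (simp add: abs_mult)

lemma borel_measurable_kernel_term[measurable]:
  "s \<in> I \<Longrightarrow> t \<in> I \<Longrightarrow> kernel_term s t \<in> borel_measurable M"
  unfolding kernel_term_def by measurable

lemma two_sample_swap: "two_sample M P2 P1 Z I S2 S1 \<beta> \<alpha>"
  using indep finite_I S1_subset S2_subset law1 law2 real_prob_pair_swap[OF real_prob_pair_axioms]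
  by (simp add: two_sample_def two_sample_axioms_def prob_space_axioms)

lemma expectation_kernel_term_lone_fst:
  assumes "s \<in> S1" "t \<in> S2" "s' \<in> S1" "t' \<in> S2" "s \<notin> {t, s', t'}"
  shows "expectation (\<lambda>\<omega>. kernel_term s t \<omega> * kernel_term s' t' \<omega>) = 0"
proof -
  define B where "B = {t, s', t'}"
  define \<Phi> where "\<Phi> x y = centred_kernel P1 P2 (\<alpha> x) (\<beta> (y t)) * centred_kernel P1 P2 (\<alpha> (y s')) (\<beta> (y t'))"
    for x y
  have B: "t \<in> B" "s' \<in> B" "t' \<in> B" "B \<subseteq> I" "s \<notin> B" "s \<in> I"
    using assms S1_subset S2_subset by (auto simp: B_def)
  have "expectation (\<lambda>\<omega>. \<Phi> (Z s \<omega>) (restrict (\<lambda>i. Z i \<omega>) B)) = 0"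
  proof (rule indep_vars_expectation_eq_0[OF indep B(6,4,5)])
    show "(\<lambda>(x, y). \<Phi> x y) \<in> borel_measurable (borel \<Otimes>\<^sub>M PiM B (\<lambda>_. borel))"
      using B(1-3) unfolding \<Phi>_def by measurable
    show "\<bar>\<Phi> x y\<bar> \<le> 2 * 2" for x y
      unfolding \<Phi>_def abs_mult by (intro mult_mono abs_centred_kernel_le) auto
    fix y
    have "(\<integral>x. \<Phi> x y \<partial>distr M borel (Z s))
        = (\<integral>a. centred_kernel P1 P2 a (\<beta> (y t)) \<partial>distr M borel (\<lambda>\<omega>. \<alpha> (Z s \<omega>)))
          * centred_kernel P1 P2 (\<alpha> (y s')) (\<beta> (y t'))"
      using B(6) by (simp add: \<Phi>_def integral_distr)
    then show "(\<integral>x. \<Phi> x y \<partial>distr M borel (Z s)) = 0"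
      using law1[OF assms(1)] integral_centred_kernel_fst by simp
  qed
  then show ?thesis
    using B(1-3) by (simp add: \<Phi>_def kernel_term_def)
qed

text \<open>The kernel is antisymmetric under exchanging the two laws, so this is the previous lemma
  for the swapped sample.\<close>

lemma expectation_kernel_term_lone_snd:
  assumes "s \<in> S1" "t \<in> S2" "s' \<in> S1" "t' \<in> S2" "t \<notin> {s, s', t'}"
  shows "expectation (\<lambda>\<omega>. kernel_term s t \<omega> * kernel_term s' t' \<omega>) = 0"
  using two_sample.expectation_kernel_term_lone_fst[OF two_sample_swap, of t s t' s'] assms
  by (simp add: two_sample.kernel_term_def[OF two_sample_swap] kernel_term_def centred_kernel_swap)

lemma expectation_kernel_term_mult_eq_0:
  assumes "s \<in> S1" "t \<in> S2" "s' \<in> S1" "t' \<in> S2" "s \<noteq> t" "s' \<noteq> t'"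
    and "(s', t') \<notin> {(s, t), (t, s)}"
  shows "expectation (\<lambda>\<omega>. kernel_term s t \<omega> * kernel_term s' t' \<omega>) = 0"
proof (cases "s \<in> {t, s', t'}")
  case True
  with assms(5-7) have "t \<notin> {s, s', t'}"
    by auto
  then show ?thesis
    by (rule expectation_kernel_term_lone_snd[OF assms(1-4)])
qed (rule expectation_kernel_term_lone_fst[OF assms(1-4)])

lemma integrable_kernel_term_mult:
  assumes "s \<in> I" "t \<in> I" "s' \<in> I" "t' \<in> I"
  shows "integrable M (\<lambda>\<omega>. kernel_term s t \<omega> * kernel_term s' t' \<omega>)"
  using assms by (intro integrable_bounded_real[OF _ abs_kernel_term_mult_le]) measurable

lemma expectation_kernel_term_mult_le:
  assumes "s \<in> I" "t \<in> I" "s' \<in> I" "t' \<in> I"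
  shows "expectation (\<lambda>\<omega>. kernel_term s t \<omega> * kernel_term s' t' \<omega>) \<le> 4"
  using integrable_kernel_term_mult[OF assms]
  by (rule integral_le_const) (simp add: order_trans[OF abs_ge_self abs_kernel_term_mult_le])

lemma finite_S1: "finite S1" and finite_S2: "finite S2"
  using finite_I S1_subset S2_subset by (auto intro: finite_subset)

lemma sum_expectation_kernel_term_mult_le:
  assumes "(s, t) \<in> Sigma S1 (\<lambda>s. S2 - {s})"
  shows "(\<Sum>(s', t')\<in>Sigma S1 (\<lambda>s. S2 - {s}).
           expectation (\<lambda>\<omega>. kernel_term s t \<omega> * kernel_term s' t' \<omega>)) \<le> 8"
proof -
  let ?K = "Sigma S1 (\<lambda>s. S2 - {s})"
  let ?E = "\<lambda>(s', t'). expectation (\<lambda>\<omega>. kernel_term s t \<omega> * kernel_term s' t' \<omega>)"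
  have "sum ?E ?K = sum ?E (?K \<inter> {(s, t), (t, s)})"
    using assms finite_S1 finite_S2
    by (intro sum.mono_neutral_right) (auto intro!: expectation_kernel_term_mult_eq_0)
  also have "\<dots> \<le> (\<Sum>q\<in>?K \<inter> {(s, t), (t, s)}. 4)"
    using S1_subset S2_subset by (intro sum_mono) (auto intro!: expectation_kernel_term_mult_le)
  also have "\<dots> = 4 * real (card (?K \<inter> {(s, t), (t, s)}))"
    by simp
  also have "\<dots> \<le> 8"
    using card_Int_doubleton_le[of ?K "(s, t)" "(t, s)"] by linarith
  finally show ?thesis .
qed

lemma abs_sum_kernel_term_le: "\<bar>\<Sum>(s, t)\<in>A. kernel_term s t \<omega>\<bar> \<le> 2 * card A"
proof -
  have "\<bar>\<Sum>(s, t)\<in>A. kernel_term s t \<omega>\<bar> \<le> (\<Sum>(s, t)\<in>A. \<bar>kernel_term s t \<omega>\<bar>)"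
    by (rule order_trans[OF sum_abs]) (simp add: case_prod_beta)
  also have "\<dots> \<le> (\<Sum>(s, t)\<in>A. 2)"
    by (intro sum_mono) (simp add: case_prod_beta abs_kernel_term_le)
  finally show ?thesis
    by simp
qed

lemma expectation_off_diagonal_sq_le:
  "expectation (\<lambda>\<omega>. (\<Sum>(s, t)\<in>Sigma S1 (\<lambda>s. S2 - {s}). kernel_term s t \<omega>)\<^sup>2)
     \<le> 8 * card S1 * card S2"
proof -
  let ?K = "Sigma S1 (\<lambda>s. S2 - {s})"
  have K: "finite ?K" "?K \<subseteq> I \<times> I"
    using finite_S1 finite_S2 S1_subset S2_subset by auto
  have int: "integrable M (\<lambda>\<omega>. kernel_term (fst p) (snd p) \<omega> * kernel_term (fst q) (snd q) \<omega>)"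
    if "p \<in> ?K" "q \<in> ?K" for p q
    using that K(2) by (intro integrable_kernel_term_mult) auto
  have "expectation (\<lambda>\<omega>. (\<Sum>(s, t)\<in>?K. kernel_term s t \<omega>)\<^sup>2)
      = expectation (\<lambda>\<omega>. \<Sum>(s, t)\<in>?K. \<Sum>(s', t')\<in>?K. kernel_term s t \<omega> * kernel_term s' t' \<omega>)"
    by (simp add: power2_eq_square sum_product case_prod_beta)
  also have "\<dots> = (\<Sum>(s, t)\<in>?K. \<Sum>(s', t')\<in>?K. expectation (\<lambda>\<omega>. kernel_term s t \<omega> * kernel_term s' t' \<omega>))"
    using int by (simp add: case_prod_beta Bochner_Integration.integral_sum integrable_sum)
  also have "\<dots> \<le> (\<Sum>(s, t)\<in>?K. 8)"
    by (intro sum_mono) (auto intro: sum_expectation_kernel_term_mult_le)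
  also have "\<dots> = 8 * real (card ?K)"
    by (simp add: case_prod_beta)
  also have "\<dots> \<le> 8 * real (card (S1 \<times> S2))"
    using finite_S1 finite_S2 by (intro mult_left_mono of_nat_mono card_mono) auto
  finally show ?thesis
    by (simp add: card_cartesian_product)
qed

lemma sum_sum_eq_diagonal_plus_off_diagonal:
  "(\<Sum>s\<in>S1. \<Sum>t\<in>S2. kernel_term s t \<omega>)
     = (\<Sum>s\<in>S1 \<inter> S2. kernel_term s s \<omega>) + (\<Sum>(s, t)\<in>Sigma S1 (\<lambda>s. S2 - {s}). kernel_term s t \<omega>)"
proof -
  have "(\<Sum>t\<in>S2. kernel_term s t \<omega>) = (if s \<in> S2 then kernel_term s s \<omega> else 0) + (\<Sum>t\<in>S2 - {s}. kernel_term s t \<omega>)" for s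
    using finite_S2 by (cases "s \<in> S2") (auto simp: sum.remove)
  then show ?thesis
    using finite_S1 finite_S2
    by (simp add: sum.distrib sum.inter_restrict sum.Sigma flip: sum.inter_filter)
qed

lemma expectation_sum_sum_sq_le:
  "expectation (\<lambda>\<omega>. (\<Sum>s\<in>S1. \<Sum>t\<in>S2. kernel_term s t \<omega>)\<^sup>2) \<le> 24 * card S1 * card S2"
proof -
  let ?D = "S1 \<inter> S2" and ?K = "Sigma S1 (\<lambda>s. S2 - {s})"
  define diag where "diag \<omega> = (\<Sum>s\<in>?D. kernel_term s s \<omega>)" for \<omega>
  define off where "off \<omega> = (\<Sum>(s, t)\<in>?K. kernel_term s t \<omega>)" for \<omega>
  have meas: "diag \<in> borel_measurable M" "off \<in> borel_measurable M"
    using S1_subset S2_subset unfolding diag_def off_def case_prod_beta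
    by (auto intro!: borel_measurable_sum borel_measurable_kernel_term)
  have abs_diag: "\<bar>diag \<omega>\<bar> \<le> 2 * card ?D" for \<omega>
    using abs_sum_kernel_term_le[where A="(\<lambda>s. (s, s)) ` ?D" and \<omega>=\<omega>]
    by (simp add: diag_def sum.reindex card_image inj_on_def)
  have "card ?D * card ?D \<le> card S1 * card S2"
    using finite_S1 finite_S2 by (intro mult_mono card_mono) auto
  then have "(2 * real (card ?D))\<^sup>2 \<le> 4 * card S1 * card S2"
    by (simp add: power2_eq_square flip: of_nat_mult)
  then have "(diag \<omega>)\<^sup>2 \<le> 4 * card S1 * card S2" for \<omega>
    using power_mono[OF abs_diag abs_ge_zero, of \<omega> 2] by simp
  then have E_diag: "expectation (\<lambda>\<omega>. (diag \<omega>)\<^sup>2) \<le> 4 * card S1 * card S2"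
    by (intro integral_le_const integrable_sq_bounded[OF meas(1) abs_diag] AE_I2)
  have "expectation (\<lambda>\<omega>. (\<Sum>s\<in>S1. \<Sum>t\<in>S2. kernel_term s t \<omega>)\<^sup>2)
      = expectation (\<lambda>\<omega>. (diag \<omega> + off \<omega>)\<^sup>2)"
    by (simp add: sum_sum_eq_diagonal_plus_off_diagonal diag_def off_def)
  also have "\<dots> \<le> 2 * expectation (\<lambda>\<omega>. (diag \<omega>)\<^sup>2) + 2 * expectation (\<lambda>\<omega>. (off \<omega>)\<^sup>2)"
    by (rule expectation_sq_add_le[OF meas abs_diag]) (unfold off_def, rule abs_sum_kernel_term_le)
  also have "\<dots> \<le> 2 * (4 * card S1 * card S2) + 2 * (8 * card S1 * card S2)"
    using E_diag expectation_off_diagonal_sq_le unfolding off_def by linarith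
  finally show ?thesis
    by simp
qed

lemma integrable_sum_sum_sq: "integrable M (\<lambda>\<omega>. (\<Sum>s\<in>S1. \<Sum>t\<in>S2. kernel_term s t \<omega>)\<^sup>2)"
proof (rule integrable_sq_bounded)
  show "(\<lambda>\<omega>. \<Sum>s\<in>S1. \<Sum>t\<in>S2. kernel_term s t \<omega>) \<in> borel_measurable M"
    using S1_subset S2_subset by (auto intro!: borel_measurable_sum borel_measurable_kernel_term)
  show "\<bar>\<Sum>s\<in>S1. \<Sum>t\<in>S2. kernel_term s t \<omega>\<bar> \<le> 2 * card (S1 \<times> S2)" for \<omega>
    using abs_sum_kernel_term_le[where A="S1 \<times> S2" and \<omega>=\<omega>] finite_S1 finite_S2
    by (simp add: sum.cartesian_product)
qed

end

section \<open>The design with complete and incomplete pairs\<close>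

lemma double_average_cfun_minus_projection:
  fixes a b :: "'i \<Rightarrow> real" and P Q :: "real measure"
  assumes "finite A" "finite B" "A \<noteq> {}" "B \<noteq> {}"
  defines "p \<equiv> \<integral>x. normcdf P x \<partial>Q"
  shows "(\<Sum>t\<in>B. (\<Sum>s\<in>A. cfun (b t - a s)) / card A) / card B - p
          - ((\<Sum>t\<in>B. normcdf P (b t)) / card B - (\<Sum>s\<in>A. normcdf Q (a s)) / card A + 1 - 2 * p)
         = (\<Sum>s\<in>A. \<Sum>t\<in>B. centred_kernel P Q (a s) (b t)) / (card A * card B)"
proof -
  have kernel_sum: "(\<Sum>s\<in>A. \<Sum>t\<in>B. centred_kernel P Q (a s) (b t))
      = (\<Sum>s\<in>A. \<Sum>t\<in>B. cfun (b t - a s)) - card A * (\<Sum>t\<in>B. normcdf P (b t))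
        - card B * (card A - (\<Sum>s\<in>A. normcdf Q (a s))) + card A * card B * p"
    by (simp add: centred_kernel_def p_def sum.distrib sum_subtractf sum.swap[of _ A B]
        sum_distrib_left[symmetric] algebra_simps)
  have cfun_sum: "(\<Sum>t\<in>B. (\<Sum>s\<in>A. cfun (b t - a s)) / card A) = (\<Sum>s\<in>A. \<Sum>t\<in>B. cfun (b t - a s)) / card A"
    by (simp add: sum_divide_distrib[symmetric] sum.swap[of _ B A])
  show ?thesis
    unfolding kernel_sum cfun_sum using assms(1-4) by (simp add: field_simps)
qed

text \<open>The image of a non-measurable map is the null measure: if a preimage \<open>f -` A\<close> is not
  measurable, neither is that of the complement of \<open>A\<close>, and additivity forces total mass 0.
  This is needed because the law of an incomplete group-1 vector is only given as
  \<open>distr Pc borel fst\<close>, which says nothing about \<open>Pc\<close> when there are no complete pairs.\<close>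

lemma measurable_if_emeasure_distr_neq_0:
  assumes "emeasure (distr P N f) (space N) \<noteq> 0" "f \<in> space P \<rightarrow> space N"
  shows "f \<in> measurable P N"
proof (rule measurableI)
  define \<mu> where "\<mu> = (\<lambda>A. emeasure P (f -` A \<inter> space P))"
  have "emeasure (distr P N f) (space N) = (if measure_space (space N) (sets N) \<mu> then \<mu> (space N) else 0)"
    by (simp add: distr_def \<mu>_def emeasure_measure_of_conv sets.sigma_sets_eq)
  then have \<mu>: "measure_space (space N) (sets N) \<mu>" "\<mu> (space N) \<noteq> 0"
    using assms(1) by (auto split: if_splits)
  then have additive: "additive (sets N) \<mu>"
    unfolding measure_space_def
    by (intro ring_of_sets.countably_additive_additive) (auto intro: sigma_algebra.axioms algebra.axioms)
  fix A assume A: "A \<in> sets N"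
  show "f -` A \<inter> space P \<in> sets P"
  proof (rule ccontr)
    assume not_sets: "f -` A \<inter> space P \<notin> sets P"
    have "space P - (f -` (space N - A) \<inter> space P) = f -` A \<inter> space P"
      using assms(2) by auto
    then have "f -` (space N - A) \<inter> space P \<notin> sets P"
      using not_sets by (metis sets.compl_sets)
    moreover have "\<mu> (space N) = \<mu> A + \<mu> (space N - A)"
      using additiveD[OF additive, of A "space N - A"] A sets.sets_into_space[OF A]
      by (simp add: Un_absorb1)
    ultimately show False
      using not_sets \<mu>(2) by (simp add: \<mu>_def emeasure_notin_sets)
  qed
qed (use assms(2) in auto)

lemma distr_comp_eq_if_distr_eq:
  assumes "prob_space M" "X \<in> measurable M N" "distr M N X = distr P N f"
    and "f \<in> space P \<rightarrow> space N" "g \<in> measurable N L"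
  shows "distr M L (\<lambda>\<omega>. g (X \<omega>)) = distr P L (\<lambda>z. g (f z))"
proof -
  have "prob_space (distr P N f)"
    using prob_space.prob_space_distr[OF assms(1,2)] assms(3) by simp
  then have f: "f \<in> measurable P N"
    using assms(4) by (intro measurable_if_emeasure_distr_neq_0) (auto dest: prob_space.emeasure_space_1)
  have "distr M L (\<lambda>\<omega>. g (X \<omega>)) = distr (distr M N X) L g"
    using distr_distr[OF assms(5,2)] by (simp add: comp_def)
  also have "\<dots> = distr P L (\<lambda>z. g (f z))"
    using distr_distr[OF assms(5) f] assms(3) by (simp add: comp_def)
  finally show ?thesis .
qed

lemma borel_measurable_vec_nth[measurable]: "(\<lambda>x::real^'d. x $ l) \<in> borel_measurable borel"
  by (intro borel_measurable_continuous_onI continuous_intros)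

lemma borel_measurable_fst_vec_nth[measurable]:
  "(\<lambda>z::(real^'d) \<times> (real^'d). fst z $ l) \<in> borel_measurable borel"
  by (intro borel_measurable_continuous_onI continuous_intros)

lemma borel_measurable_snd_vec_nth[measurable]:
  "(\<lambda>z::(real^'d) \<times> (real^'d). snd z $ l) \<in> borel_measurable borel"
  by (intro borel_measurable_continuous_onI continuous_intros)

locale incomplete_pairs = prob_space M
  for M :: "'a measure" and Pc :: "((real^'d) \<times> (real^'d)) measure" and nc n1 n2 :: nat
    and Xc :: "nat \<Rightarrow> 'a \<Rightarrow> (real^'d) \<times> (real^'d)" and X1 X2 :: "nat \<Rightarrow> 'a \<Rightarrow> real^'d" +
  assumes meas_c: "\<And>j. j < nc \<Longrightarrow> Xc j \<in> borel_measurable M"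
    and meas_1: "\<And>k. k < n1 \<Longrightarrow> X1 k \<in> borel_measurable M"
    and meas_2: "\<And>k. k < n2 \<Longrightarrow> X2 k \<in> borel_measurable M"
    and indep: "indep_vars (\<lambda>_. borel)
        (\<lambda>s \<omega>. case s of Inl j \<Rightarrow> Xc j \<omega>
                       | Inr (Inl k) \<Rightarrow> (X1 k \<omega>, X1 k \<omega>)
                       | Inr (Inr k) \<Rightarrow> (X2 k \<omega>, X2 k \<omega>))
        (Inl ` {..<nc} \<union> Inr ` (Inl ` {..<n1} \<union> Inr ` {..<n2}))"
    and law_c: "\<And>j. j < nc \<Longrightarrow> distr M borel (Xc j) = Pc"
    and law_1: "\<And>k. k < n1 \<Longrightarrow> distr M borel (X1 k) = distr Pc borel fst"
    and law_2: "\<And>k. k < n2 \<Longrightarrow> distr M borel (X2 k) = distr Pc borel snd"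
begin

text \<open>Incomplete subjects are stored as pairs (X, X) so that all subjects form one independent
  family; only the coordinate of their own group is ever read.\<close>

definition sample :: "nat + nat + nat \<Rightarrow> 'a \<Rightarrow> (real^'d) \<times> (real^'d)" where
  "sample s \<omega> = (case s of Inl j \<Rightarrow> Xc j \<omega> | Inr (Inl k) \<Rightarrow> (X1 k \<omega>, X1 k \<omega>)
                           | Inr (Inr k) \<Rightarrow> (X2 k \<omega>, X2 k \<omega>))"

definition group1 :: "(nat + nat + nat) set" where
  "group1 = Inl ` {..<nc} \<union> Inr ` Inl ` {..<n1}"

definition group2 :: "(nat + nat + nat) set" where
  "group2 = Inl ` {..<nc} \<union> Inr ` Inr ` {..<n2}"

lemma indep_sample: "indep_vars (\<lambda>_. borel) sample (group1 \<union> group2)"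
proof -
  have "group1 \<union> group2 = Inl ` {..<nc} \<union> Inr ` (Inl ` {..<n1} \<union> Inr ` {..<n2})"
    by (auto simp: group1_def group2_def)
  then show ?thesis
    using indep by (simp add: sample_def[abs_def])
qed

lemma sum_group1: "(\<Sum>s\<in>group1. g s) = (\<Sum>j<nc. g (Inl j)) + (\<Sum>k<n1. g (Inr (Inl k)))"
  unfolding group1_def by (subst sum.union_disjoint) (auto simp: sum.reindex inj_on_def)

lemma sum_group2: "(\<Sum>t\<in>group2. g t) = (\<Sum>j<nc. g (Inl j)) + (\<Sum>k<n2. g (Inr (Inr k)))"
  unfolding group2_def by (subst sum.union_disjoint) (auto simp: sum.reindex inj_on_def)

lemma card_group1: "card group1 = nc + n1"
  unfolding group1_def by (subst card_Un_disjoint) (auto simp: card_image inj_on_def)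

lemma card_group2: "card group2 = nc + n2"
  unfolding group2_def by (subst card_Un_disjoint) (auto simp: card_image inj_on_def)

lemma law_group1:
  assumes "s \<in> group1"
  shows "distr M borel (\<lambda>\<omega>. fst (sample s \<omega>) $ l) = marg1 Pc l"
proof -
  from assms consider (complete) j where "s = Inl j" "j < nc"
    | (incomplete) k where "s = Inr (Inl k)" "k < n1"
    by (auto simp: group1_def)
  then show ?thesis
  proof cases
    case complete
    then show ?thesis
      using distr_distr[of "\<lambda>z. fst z $ l" borel borel "Xc j" M, OF _ meas_c[OF complete(2)]]
      by (simp add: sample_def marg1_def law_c comp_def)
  next
    case incomplete
    then show ?thesis
      using distr_comp_eq_if_distr_eq[OF prob_space_axioms meas_1[OF incomplete(2)] law_1[OF incomplete(2)]
          _ borel_measurable_vec_nth]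
      by (simp add: sample_def marg1_def)
  qed
qed

lemma law_group2:
  assumes "t \<in> group2"
  shows "distr M borel (\<lambda>\<omega>. snd (sample t \<omega>) $ l) = marg2 Pc l"
proof -
  from assms consider (complete) j where "t = Inl j" "j < nc"
    | (incomplete) k where "t = Inr (Inr k)" "k < n2"
    by (auto simp: group2_def)
  then show ?thesis
  proof cases
    case complete
    then show ?thesis
      using distr_distr[of "\<lambda>z. snd z $ l" borel borel "Xc j" M, OF _ meas_c[OF complete(2)]]
      by (simp add: sample_def marg2_def law_c comp_def)
  next
    case incomplete
    then show ?thesis
      using distr_comp_eq_if_distr_eq[OF prob_space_axioms meas_2[OF incomplete(2)] law_2[OF incomplete(2)]
          _ borel_measurable_vec_nth]
      by (simp add: sample_def marg2_def)
  qed
qed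

lemma two_sample_component:
  assumes "nc + n1 > 0" "nc + n2 > 0"
  shows "two_sample M (marg1 Pc l) (marg2 Pc l) sample (group1 \<union> group2) group1 group2
           (\<lambda>z. fst z $ l) (\<lambda>z. snd z $ l)"
proof -
  have sample_measurable: "sample s \<in> borel_measurable M" if "s \<in> group1 \<union> group2" for s
    using indep_sample that by (auto simp: indep_vars_def)
  obtain s t where "s \<in> group1" "t \<in> group2"
    using assms card_group1 card_group2 by (metis card.empty ex_in_conv less_irrefl)
  then have "prob_space (marg1 Pc l)" "prob_space (marg2 Pc l)"
    unfolding law_group1[OF \<open>s \<in> group1\<close>, of l, symmetric] law_group2[OF \<open>t \<in> group2\<close>, of l, symmetric]
    using sample_measurable[of s] sample_measurable[of t]
    by (auto intro!: prob_space_distr measurable_compose[OF _ borel_measurable_fst_vec_nth]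
        measurable_compose[OF _ borel_measurable_snd_vec_nth])
  then have "real_prob_pair (marg1 Pc l) (marg2 Pc l)"
    by (simp add: real_prob_pair_def real_prob_space_def real_prob_space_axioms_def marg1_def marg2_def)
  then show ?thesis
    using indep_sample law_group1 law_group2
    by (simp add: two_sample_def two_sample_axioms_def prob_space_axioms group1_def group2_def)
qed

definition kernel_double_sum :: "'d \<Rightarrow> 'a \<Rightarrow> real" where
  "kernel_double_sum l \<omega> = (\<Sum>s\<in>group1. \<Sum>t\<in>group2.
     centred_kernel (marg1 Pc l) (marg2 Pc l) (fst (sample s \<omega>) $ l) (snd (sample t \<omega>) $ l))"

lemma phat_minus_Uvec_component:
  assumes "nc + n1 > 0" "nc + n2 > 0"
  shows "phat nc n1 n2 (\<lambda>j. Xc j \<omega>) (\<lambda>k. X1 k \<omega>) (\<lambda>k. X2 k \<omega>) $ l - pvec Pc $ l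
           - Uvec Pc nc n1 n2 (\<lambda>j. Xc j \<omega>) (\<lambda>k. X1 k \<omega>) (\<lambda>k. X2 k \<omega>) $ l
         = kernel_double_sum l \<omega> / (real (nc + n1) * real (nc + n2))"
proof -
  define a where "a s = fst (sample s \<omega>) $ l" for s
  define b where "b t = snd (sample t \<omega>) $ l" for t
  have phat: "phat nc n1 n2 (\<lambda>j. Xc j \<omega>) (\<lambda>k. X1 k \<omega>) (\<lambda>k. X2 k \<omega>) $ l
      = (\<Sum>t\<in>group2. (\<Sum>s\<in>group1. cfun (b t - a s)) / card group1) / card group2"
    by (simp add: sum_group1 sum_group2 card_group1 card_group2 phat_def Fhat_def a_def b_def sample_def)
  have Uvec: "Uvec Pc nc n1 n2 (\<lambda>j. Xc j \<omega>) (\<lambda>k. X1 k \<omega>) (\<lambda>k. X2 k \<omega>) $ l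
      = (\<Sum>t\<in>group2. normcdf (marg1 Pc l) (b t)) / card group2
        - (\<Sum>s\<in>group1. normcdf (marg2 Pc l) (a s)) / card group1 + 1 - 2 * pvec Pc $ l"
    by (simp add: sum_group1 sum_group2 card_group1 card_group2 Uvec_def Let_def a_def b_def sample_def
        add_divide_distrib diff_divide_distrib)
  have "finite group1" "finite group2" "group1 \<noteq> {}" "group2 \<noteq> {}"
    using assms card_group1 card_group2 by (auto simp: group1_def group2_def)
  from double_average_cfun_minus_projection[OF this, where a=a and b=b and P="marg1 Pc l" and Q="marg2 Pc l"]
  show ?thesis
    unfolding phat Uvec by (simp add: pvec_def card_group1 card_group2 a_def b_def kernel_double_sum_def)
qed

lemma sq_norm_scaled_error_eq:
  assumes "nc + n1 > 0" "nc + n2 > 0" "0 \<le> c"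
  shows "(norm (sqrt c *\<^sub>R (phat nc n1 n2 (\<lambda>j. Xc j \<omega>) (\<lambda>k. X1 k \<omega>) (\<lambda>k. X2 k \<omega>) - pvec Pc)
             - sqrt c *\<^sub>R Uvec Pc nc n1 n2 (\<lambda>j. Xc j \<omega>) (\<lambda>k. X1 k \<omega>) (\<lambda>k. X2 k \<omega>)))\<^sup>2
         = c / (real (nc + n1) * real (nc + n2))\<^sup>2 * (\<Sum>l\<in>UNIV. (kernel_double_sum l \<omega>)\<^sup>2)"
proof -
  have "(sqrt c *\<^sub>R (phat nc n1 n2 (\<lambda>j. Xc j \<omega>) (\<lambda>k. X1 k \<omega>) (\<lambda>k. X2 k \<omega>) - pvec Pc)
          - sqrt c *\<^sub>R Uvec Pc nc n1 n2 (\<lambda>j. Xc j \<omega>) (\<lambda>k. X1 k \<omega>) (\<lambda>k. X2 k \<omega>)) $ l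
      = sqrt c * (kernel_double_sum l \<omega> / (real (nc + n1) * real (nc + n2)))" for l
    unfolding phat_minus_Uvec_component[OF assms(1,2), symmetric] by (simp add: algebra_simps)
  then show ?thesis
    using assms(3)
    by (simp add: power2_norm_eq_inner inner_vec_def power_mult_distrib power_divide sum_distrib_left
        flip: power2_eq_square)
qed

lemma expectation_kernel_double_sum_sq:
  assumes "nc + n1 > 0" "nc + n2 > 0"
  shows "integrable M (\<lambda>\<omega>. (kernel_double_sum l \<omega>)\<^sup>2)"
    and "expectation (\<lambda>\<omega>. (kernel_double_sum l \<omega>)\<^sup>2) \<le> 24 * real (nc + n1) * real (nc + n2)"
proof -
  note T = two_sample_component[OF assms, of l]
  have "kernel_double_sum l = (\<lambda>\<omega>. \<Sum>s\<in>group1. \<Sum>t\<in>group2. two_sample.kernel_term (marg1 Pc l)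
      (marg2 Pc l) sample (\<lambda>z. fst z $ l) (\<lambda>z. snd z $ l) s t \<omega>)"
    by (simp add: kernel_double_sum_def two_sample.kernel_term_def[OF T] fun_eq_iff)
  then show "integrable M (\<lambda>\<omega>. (kernel_double_sum l \<omega>)\<^sup>2)"
    and "expectation (\<lambda>\<omega>. (kernel_double_sum l \<omega>)\<^sup>2) \<le> 24 * real (nc + n1) * real (nc + n2)"
    using two_sample.integrable_sum_sum_sq[OF T] two_sample.expectation_sum_sum_sq_le[OF T]
    by (simp_all add: card_group1 card_group2)
qed

lemma expectation_sq_norm_le:
  fixes N0 :: real
  assumes "nc + n1 > 0" "nc + n2 > 0" and "real (nc + n1 + n2) / real (nc + n1) \<le> N0"
  shows "expectation (\<lambda>\<omega>.
            (norm (sqrt (real (nc + n1 + n2)) *\<^sub>R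
                     (phat nc n1 n2 (\<lambda>j. Xc j \<omega>) (\<lambda>k. X1 k \<omega>) (\<lambda>k. X2 k \<omega>) - pvec Pc)
                   - sqrt (real (nc + n1 + n2)) *\<^sub>R
                     Uvec Pc nc n1 n2 (\<lambda>j. Xc j \<omega>) (\<lambda>k. X1 k \<omega>) (\<lambda>k. X2 k \<omega>)))\<^sup>2)
         \<le> 24 * CARD('d) * N0 / real (nc + n2)"
proof -
  define n m1 m2 where "n = real (nc + n1 + n2)" and "m1 = real (nc + n1)" and "m2 = real (nc + n2)"
  have m: "m1 > 0" "m2 > 0"
    using assms(1,2) by (simp_all add: m1_def m2_def del: of_nat_add)
  have "expectation (\<lambda>\<omega>.
            (norm (sqrt n *\<^sub>R (phat nc n1 n2 (\<lambda>j. Xc j \<omega>) (\<lambda>k. X1 k \<omega>) (\<lambda>k. X2 k \<omega>) - pvec Pc)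
                   - sqrt n *\<^sub>R Uvec Pc nc n1 n2 (\<lambda>j. Xc j \<omega>) (\<lambda>k. X1 k \<omega>) (\<lambda>k. X2 k \<omega>)))\<^sup>2)
      = n / (m1 * m2)\<^sup>2 * (\<Sum>l\<in>UNIV. expectation (\<lambda>\<omega>. (kernel_double_sum l \<omega>)\<^sup>2))"
    using expectation_kernel_double_sum_sq(1)[OF assms(1,2)]
    by (simp add: sq_norm_scaled_error_eq[OF assms(1,2)] n_def m1_def m2_def)
  also have "\<dots> \<le> n / (m1 * m2)\<^sup>2 * (\<Sum>l\<in>(UNIV :: 'd set). 24 * m1 * m2)"
    using expectation_kernel_double_sum_sq(2)[OF assms(1,2)]
    by (intro mult_left_mono sum_mono) (auto simp: n_def m1_def m2_def)
  also have "\<dots> = 24 * CARD('d) * (n / m1) / m2"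
    using m by (simp add: power2_eq_square)
  also have "\<dots> \<le> 24 * CARD('d) * N0 / m2"
    using assms(3) m by (intro divide_right_mono mult_left_mono) (auto simp: n_def m1_def)
  finally show ?thesis
    by (simp only: n_def m2_def)
qed

end

theorem theorem4p2:
  fixes M :: "'a measure"
    and Pc :: "((real^'d) \<times> (real^'d)) measure"
    and nc n1 n2 :: "nat \<Rightarrow> nat"
    and Xc :: "nat \<Rightarrow> nat \<Rightarrow> 'a \<Rightarrow> (real^'d) \<times> (real^'d)"
    and X1 X2 :: "nat \<Rightarrow> nat \<Rightarrow> 'a \<Rightarrow> real^'d"
    and N0 :: real
  assumes "prob_space M"
    and meas_c: "\<And>\<nu> j. j < nc \<nu> \<Longrightarrow> Xc \<nu> j \<in> borel_measurable M"
    and meas_1: "\<And>\<nu> k. k < n1 \<nu> \<Longrightarrow> X1 \<nu> k \<in> borel_measurable M"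
    and meas_2: "\<And>\<nu> k. k < n2 \<nu> \<Longrightarrow> X2 \<nu> k \<in> borel_measurable M"
    and indep: "\<And>\<nu>. prob_space.indep_vars M (\<lambda>_. borel)
        (\<lambda>s \<omega>. case s of Inl j \<Rightarrow> Xc \<nu> j \<omega>
                       | Inr (Inl k) \<Rightarrow> (X1 \<nu> k \<omega>, X1 \<nu> k \<omega>)
                       | Inr (Inr k) \<Rightarrow> (X2 \<nu> k \<omega>, X2 \<nu> k \<omega>))
        (Inl ` {..<nc \<nu>} \<union> Inr ` (Inl ` {..<n1 \<nu>} \<union> Inr ` {..<n2 \<nu>}))"
    and law_c: "\<And>\<nu> j. j < nc \<nu> \<Longrightarrow> distr M borel (Xc \<nu> j) = Pc"
    and law_1: "\<And>\<nu> k. k < n1 \<nu> \<Longrightarrow> distr M borel (X1 \<nu> k) = distr Pc borel fst"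
    and law_2: "\<And>\<nu> k. k < n2 \<nu> \<Longrightarrow> distr M borel (X2 \<nu> k) = distr Pc borel snd"
    and nondeg1: "\<And>l c. measure (marg1 Pc l) {c} < 1"
    and nondeg2: "\<And>l c. measure (marg2 Pc l) {c} < 1"
    and A1_lim1: "filterlim (\<lambda>\<nu>. nc \<nu> + n1 \<nu>) at_top sequentially"
    and A1_lim2: "filterlim (\<lambda>\<nu>. nc \<nu> + n2 \<nu>) at_top sequentially"
    and A1_bd1: "\<And>\<nu>. real (nc \<nu> + n1 \<nu> + n2 \<nu>) / real (nc \<nu> + n1 \<nu>) \<le> N0"
    and A1_bd2: "\<And>\<nu>. real (nc \<nu> + n1 \<nu> + n2 \<nu>) / real (nc \<nu> + n2 \<nu>) \<le> N0"
  shows "(\<lambda>\<nu>. prob_space.expectation M (\<lambda>\<omega>.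
            (norm (sqrt (real (nc \<nu> + n1 \<nu> + n2 \<nu>)) *\<^sub>R
                     (phat (nc \<nu>) (n1 \<nu>) (n2 \<nu>) (\<lambda>j. Xc \<nu> j \<omega>) (\<lambda>k. X1 \<nu> k \<omega>) (\<lambda>k. X2 \<nu> k \<omega>) - pvec Pc)
                   - sqrt (real (nc \<nu> + n1 \<nu> + n2 \<nu>)) *\<^sub>R
                     Uvec Pc (nc \<nu>) (n1 \<nu>) (n2 \<nu>) (\<lambda>j. Xc \<nu> j \<omega>) (\<lambda>k. X1 \<nu> k \<omega>) (\<lambda>k. X2 \<nu> k \<omega>)))\<^sup>2))
         \<longlonglongrightarrow> 0"
proof -
  have pairs: "incomplete_pairs M Pc (nc \<nu>) (n1 \<nu>) (n2 \<nu>) (Xc \<nu>) (X1 \<nu>) (X2 \<nu>)" for \<nu>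
    using assms(1) meas_c meas_1 meas_2 indep law_c law_1 law_2
    by (simp add: incomplete_pairs_def incomplete_pairs_axioms_def)
  have "eventually (\<lambda>\<nu>. 1 \<le> nc \<nu> + n1 \<nu>) sequentially" "eventually (\<lambda>\<nu>. 1 \<le> nc \<nu> + n2 \<nu>) sequentially"
    using A1_lim1 A1_lim2 by (simp_all add: filterlim_at_top)
  then have sizes: "eventually (\<lambda>\<nu>. 0 < nc \<nu> + n1 \<nu> \<and> 0 < nc \<nu> + n2 \<nu>) sequentially"
    by eventually_elim auto
  have "filterlim (\<lambda>\<nu>. real (nc \<nu> + n2 \<nu>)) at_top sequentially"
    by (rule filterlim_compose[OF filterlim_real_sequentially A1_lim2])
  then have bound_to_0: "(\<lambda>\<nu>. 24 * CARD('d) * N0 / real (nc \<nu> + n2 \<nu>)) \<longlonglongrightarrow> 0"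
    by (intro tendsto_divide_0[OF tendsto_const] filterlim_at_top_imp_at_infinity)
  show ?thesis
    by (rule real_tendsto_sandwich[OF always_eventually eventually_mono[OF sizes] tendsto_const bound_to_0])
       (simp add: integral_nonneg, elim conjE, rule incomplete_pairs.expectation_sq_norm_le[OF pairs _ _ A1_bd1],
        assumption+)
qed

end
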